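(* Let $S$ be an AG-groupoid that satisfies both $a(bc)=(ab)(ca)$ and $(ab)c=(ca)(bc)$ for all $a,b,c\in S$. Then $S$ is a semigroup, i.e. $a(bc)=(ab)c$ for all $a,b,c\in S$.
   Context: A groupoid is a set $S$ with a binary operation written as juxtaposition. An AG-groupoid is a groupoid satisfying the left invertive law $(ab)c=(cb)a$ for all $a,b,c\in S$. Such an $S$ satisfying both identities in the claim (left abelian distributive and right abelian distributive) is called an AD-AG-groupoid. *)

theory Defs
  imports Main
begin

definition AG_groupoid :: "('a \<Rightarrow> 'a \<Rightarrow> 'a) \<Rightarrow> bool" where
  "AG_groupoid m \<longleftrightarrow> (\<forall>a b c. m (m a b) c = m (m c b) a)"

definition left_abelian_distributive :: "('a \<Rightarrow> 'a \<Rightarrow> 'a) \<Rightarrow> bool" where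
  "left_abelian_distributive m \<longleftrightarrow> (\<forall>a b c. m a (m b c) = m (m a b) (m c a))"

definition right_abelian_distributive :: "('a \<Rightarrow> 'a \<Rightarrow> 'a) \<Rightarrow> bool" where
  "right_abelian_distributive m \<longleftrightarrow> (\<forall>a b c. m (m a b) c = m (m c a) (m b c))"

end

theory Submission
  imports Defs
begin

text \<open>Every AG-groupoid is medial. Combined with the medial law, right abelian distributivity
  turns (ab)c = (cb)a into (ab)(ca), which is a(bc) by left abelian distributivity.\<close>

lemma AG_groupoid_medial:
  assumes "AG_groupoid m"
  shows "m (m a b) (m c d) = m (m a c) (m b d)"
proof -
  have invertive: "\<And>x y z. m (m x y) z = m (m z y) x"
    using assms unfolding AG_groupoid_def by blast
  have "m (m a b) (m c d) = m (m (m c d) b) a" by (rule invertive)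
  also have "\<dots> = m (m (m b d) c) a" by (simp only: invertive)
  also have "\<dots> = m (m a c) (m b d)" by (rule invertive)
  finally show ?thesis .
qed

theorem mainTheorem7:
  fixes m :: "'a \<Rightarrow> 'a \<Rightarrow> 'a"
  assumes "AG_groupoid m"
    and "left_abelian_distributive m"
    and "right_abelian_distributive m"
  shows "\<forall>a b c. m a (m b c) = m (m a b) c"
proof (intro allI)
  fix a b c
  have "m (m a b) c = m (m c b) a"
    using assms(1) unfolding AG_groupoid_def by blast
  also have "\<dots> = m (m a c) (m b a)"
    using assms(3) unfolding right_abelian_distributive_def by blast
  also have "\<dots> = m (m a b) (m c a)"
    using assms(1) by (rule AG_groupoid_medial)
  also have "\<dots> = m a (m b c)"
    using assms(2) unfolding left_abelian_distributive_def by simp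
  finally show "m a (m b c) = m (m a b) c" by (rule sym)
qed

end
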